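(* Let $p=\infty$. For every finite $S\subset\mathcal X$ and every $t\ge 0$, \[ \mathrm{VR}_t(S,d_\theta)=\mathrm{VR}_t(S_{\mathcal C},\beta)\cup \mathrm{VR}_t(S_{\mathcal Y},d_{\mathrm{reg}})\cup\Bigl(\mathrm{VR}_t(S_{\mathcal C}^{\le t},\beta)\star \mathrm{VR}_t(S_{\mathcal Y}^{\le t},d_{\mathrm{reg}})\Bigr). \]
   Context: Let $A$ be a unital $C^*$-algebra, $H$ a Hilbert space, $\mathcal X=\mathrm{CB}(A,B(H))$, $\mathcal C=\mathrm{CP}(A,B(H))$ with Bures distance $\beta$. Fix $\theta\in\mathcal C$, $\lambda>0$, $\alpha\in(0,1]$, and let $d_\theta=\beta^{BK}_{\theta,\lambda,\infty,\alpha}$ be the Bures--Kuratowski metric with $p=\infty$. It satisfies $d_\theta=\beta$ on $\mathcal C$, $d_\theta=d_{\mathrm{reg}}:=\lambda\delta_{\mathrm{reg}}^\alpha$ on $\mathcal X\setminus\mathcal C$ ($\delta_{\mathrm{reg}}$ the regular-representation metric), and $d_\theta(x,y)=\max\{r_{\mathcal C}(x),r_{\mathcal Y}(y)\}$ for $x\in\mathcal C$, $y\notin\mathcal C$, where $r_{\mathcal C}(x)=\beta(x,\theta)$, $r_{\mathcal Y}(y)=\lambda\delta_{\mathrm{reg}}(y,0)^\alpha$. $S_{\mathcal C}=S\cap\mathcal C$, $S_{\mathcal Y}=S\cap(\mathcal X\setminus\mathcal C)$, $S_{\mathcal C}^{\le t}=\{x\in S_{\mathcal C}:r_{\mathcal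 C}(x)\le t\}$, $S_{\mathcal Y}^{\le t}=\{y\in S_{\mathcal Y}:r_{\mathcal Y}(y)\le t\}$. $\mathrm{VR}_t$ denotes the Vietoris--Rips complex (finite subsets of diameter $\le t$), and for complexes $K,L$ on disjoint vertex sets $K\star L=\{\sigma\cup\tau:\sigma\in K,\tau\in L,\ \sigma,\tau\neq\varnothing\}$. *)

theory Defs
  imports Complex_Main
begin

text \<open>The ambient space X = CB(A,B(H)) is a type 'a
 with a distinguished zero map 0; C = CP(A,B(H)) is a subset of it; beta is the Bures
 distance (a metric on C); delta is the regular-representation metric on X.\<close>

definition is_metric_on :: "'a set \<Rightarrow> ('a \<Rightarrow> 'a \<Rightarrow> real) \<Rightarrow> bool" where
  "is_metric_on M d \<longleftrightarrow>
     (\<forall>x\<in>M. \<forall>y\<in>M. 0 \<le> d x y \<and> d x y = d y x \<and> (d x y = 0 \<longleftrightarrow> x = y)) \<and>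
     (\<forall>x\<in>M. \<forall>y\<in>M. \<forall>z\<in>M. d x z \<le> d x y + d y z)"

definition d_reg :: "real \<Rightarrow> real \<Rightarrow> ('a \<Rightarrow> 'a \<Rightarrow> real) \<Rightarrow> 'a \<Rightarrow> 'a \<Rightarrow> real" where
  "d_reg lam alpha delta x y = lam * (delta x y) powr alpha"

definition r_C :: "('a \<Rightarrow> 'a \<Rightarrow> real) \<Rightarrow> 'a \<Rightarrow> 'a \<Rightarrow> real" where
  "r_C beta theta x = beta x theta"

definition r_Y :: "real \<Rightarrow> real \<Rightarrow> ('a \<Rightarrow> 'a \<Rightarrow> real) \<Rightarrow> 'a::zero \<Rightarrow> real" where
  "r_Y lam alpha delta y = lam * (delta y 0) powr alpha"

text \<open>Bures--Kuratowski metric with p = infinity, via its stated description.\<close>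
definition d_theta :: "'a::zero set \<Rightarrow> ('a \<Rightarrow> 'a \<Rightarrow> real) \<Rightarrow> ('a \<Rightarrow> 'a \<Rightarrow> real)
     \<Rightarrow> 'a \<Rightarrow> real \<Rightarrow> real \<Rightarrow> 'a \<Rightarrow> 'a \<Rightarrow> real" where
  "d_theta C beta delta theta lam alpha x y =
     (if x \<in> C \<and> y \<in> C then beta x y
      else if x \<notin> C \<and> y \<notin> C then d_reg lam alpha delta x y
      else if x \<in> C then max (r_C beta theta x) (r_Y lam alpha delta y)
      else max (r_C beta theta y) (r_Y lam alpha delta x))"

definition VR :: "'a set \<Rightarrow> ('a \<Rightarrow> 'a \<Rightarrow> real) \<Rightarrow> real \<Rightarrow> 'a set set" where
  "VR S d t = {\<sigma>. \<sigma> \<subseteq> S \<and> finite \<sigma> \<and> \<sigma> \<noteq> {} \<and> (\<forall>x\<in>\<sigma>. \<forall>y\<in>\<sigma>. d x y \<le> t)}"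

definition join :: "'a set set \<Rightarrow> 'a set set \<Rightarrow> 'a set set" (infixl "\<star>" 65) where
  "K \<star> L = {\<sigma> \<union> \<tau> | \<sigma> \<tau>. \<sigma> \<in> K \<and> \<tau> \<in> L \<and> \<sigma> \<noteq> {} \<and> \<tau> \<noteq> {}}"

end

theory Submission
  imports Defs
begin

text \<open>Only the shape of \<open>d_\<theta>\<close> matters: it restricts to \<open>\<beta>\<close> on \<open>C\<close> and to \<open>d_reg\<close> off \<open>C\<close>,
  and across the two parts it is \<open>max (r_C x) (r_Y y)\<close>. Hence a mixed simplex has diameter
  \<open>\<le> t\<close> exactly when both of its parts do and every vertex lies within radius \<open>t\<close> of its
  base point.\<close>

lemma join_split_iff:
  assumes "\<forall>\<kappa>\<in>K. \<kappa> \<subseteq> C" and "\<forall>\<tau>\<in>L. \<tau> \<inter> C = {}"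
  shows "\<sigma> \<in> K \<star> L \<longleftrightarrow> \<sigma> \<inter> C \<noteq> {} \<and> \<sigma> - C \<noteq> {} \<and> \<sigma> \<inter> C \<in> K \<and> \<sigma> - C \<in> L"
proof
  assume "\<sigma> \<in> K \<star> L"
  then obtain \<kappa> \<tau> where "\<sigma> = \<kappa> \<union> \<tau>" "\<kappa> \<in> K" "\<tau> \<in> L" "\<kappa> \<noteq> {}" "\<tau> \<noteq> {}"
    by (auto simp: join_def)
  moreover from assms this have "\<sigma> \<inter> C = \<kappa>" "\<sigma> - C = \<tau>"
    by blast+
  ultimately show "\<sigma> \<inter> C \<noteq> {} \<and> \<sigma> - C \<noteq> {} \<and> \<sigma> \<inter> C \<in> K \<and> \<sigma> - C \<in> L"
    by simp
next
  assume "\<sigma> \<inter> C \<noteq> {} \<and> \<sigma> - C \<noteq> {} \<and> \<sigma> \<inter> C \<in> K \<and> \<sigma> - C \<in> L"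
  moreover have "\<sigma> = \<sigma> \<inter> C \<union> (\<sigma> - C)"
    by blast
  ultimately show "\<sigma> \<in> K \<star> L"
    unfolding join_def by blast
qed

locale max_gluing =
  fixes C :: "'a set" and d dC dY :: "'a \<Rightarrow> 'a \<Rightarrow> real" and rC rY :: "'a \<Rightarrow> real"
  assumes dist_inside: "x \<in> C \<Longrightarrow> y \<in> C \<Longrightarrow> d x y = dC x y"
    and dist_outside: "x \<notin> C \<Longrightarrow> y \<notin> C \<Longrightarrow> d x y = dY x y"
    and dist_across: "x \<in> C \<Longrightarrow> y \<notin> C \<Longrightarrow> d x y = max (rC x) (rY y)"
    and dist_across_sym: "x \<in> C \<Longrightarrow> y \<notin> C \<Longrightarrow> d y x = max (rC x) (rY y)"
begin

lemma VR_inside_iff: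
  assumes "\<sigma> \<subseteq> C"
  shows "\<sigma> \<in> VR S d t \<longleftrightarrow> \<sigma> \<in> VR (S \<inter> C) dC t"
  using assms by (auto simp: VR_def) (metis dist_inside subsetD)+

lemma VR_outside_iff:
  assumes "\<sigma> \<inter> C = {}"
  shows "\<sigma> \<in> VR S d t \<longleftrightarrow> \<sigma> \<in> VR (S - C) dY t"
  using assms by (auto simp: VR_def) (metis dist_outside disjoint_iff)+

lemma VR_mixed_iff:
  assumes "a \<in> \<sigma>" "a \<in> C" "b \<in> \<sigma>" "b \<notin> C"
  shows "\<sigma> \<in> VR S d t \<longleftrightarrow>
           \<sigma> \<inter> C \<in> VR {x \<in> S \<inter> C. rC x \<le> t} dC t \<and>
           \<sigma> - C \<in> VR {y \<in> S - C. rY y \<le> t} dY t"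
proof
  assume "\<sigma> \<in> VR S d t"
  then have "\<sigma> \<subseteq> S" "finite \<sigma>" and diam: "\<And>x y. x \<in> \<sigma> \<Longrightarrow> y \<in> \<sigma> \<Longrightarrow> d x y \<le> t"
    by (auto simp: VR_def)
  have "rC x \<le> t" if "x \<in> \<sigma> \<inter> C" for x
    using diam[of x b] that assms by (simp add: dist_across)
  moreover have "rY y \<le> t" if "y \<in> \<sigma> - C" for y
    using diam[of a y] that assms by (simp add: dist_across)
  ultimately show "\<sigma> \<inter> C \<in> VR {x \<in> S \<inter> C. rC x \<le> t} dC t \<and>
                   \<sigma> - C \<in> VR {y \<in> S - C. rY y \<le> t} dY t"
    using \<open>\<sigma> \<subseteq> S\<close> \<open>finite \<sigma>\<close> diam assms
    by (auto simp: VR_def) (metis dist_inside dist_outside)+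
next
  assume "\<sigma> \<inter> C \<in> VR {x \<in> S \<inter> C. rC x \<le> t} dC t \<and>
          \<sigma> - C \<in> VR {y \<in> S - C. rY y \<le> t} dY t"
  then have "\<sigma> \<inter> C \<union> (\<sigma> - C) \<in> VR S d t"
    by (auto simp: VR_def dist_inside dist_outside dist_across dist_across_sym)
  then show "\<sigma> \<in> VR S d t"
    by (simp add: Int_Diff_Un)
qed

theorem VR_eq:
  "VR S d t = VR (S \<inter> C) dC t \<union> VR (S - C) dY t \<union>
     (VR {x \<in> S \<inter> C. rC x \<le> t} dC t \<star> VR {y \<in> S - C. rY y \<le> t} dY t)"
  (is "_ = ?inside \<union> ?outside \<union> (?K \<star> ?L)")
proof (rule set_eqI)
  fix \<sigma>
  have join_iff: "\<sigma> \<in> ?K \<star> ?L \<longleftrightarrow>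
      \<sigma> \<inter> C \<noteq> {} \<and> \<sigma> - C \<noteq> {} \<and> \<sigma> \<inter> C \<in> ?K \<and> \<sigma> - C \<in> ?L"
    by (rule join_split_iff) (auto simp: VR_def)
  consider "\<sigma> \<subseteq> C" | "\<sigma> \<inter> C = {}" | a b where "a \<in> \<sigma>" "a \<in> C" "b \<in> \<sigma>" "b \<notin> C"
    by blast
  then show "\<sigma> \<in> VR S d t \<longleftrightarrow> \<sigma> \<in> ?inside \<union> ?outside \<union> (?K \<star> ?L)"
  proof cases
    case 1
    then have "\<sigma> \<notin> ?outside"
      by (auto simp: VR_def)
    with 1 show ?thesis
      using join_iff VR_inside_iff by blast
  next
    case 2
    then have "\<sigma> \<notin> ?inside"
      by (auto simp: VR_def)
    with 2 show ?thesis
      using join_iff VR_outside_iff by blast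
  next
    case 3
    then have "\<sigma> \<notin> ?inside" "\<sigma> \<notin> ?outside"
      by (auto simp: VR_def)
    with 3 show ?thesis
      using join_iff VR_mixed_iff[OF 3] by blast
  qed
qed

end

lemma max_gluing_d_theta:
  "max_gluing C (d_theta C beta delta theta lam alpha) beta (d_reg lam alpha delta)
     (r_C beta theta) (r_Y lam alpha delta)"
  by unfold_locales (simp_all add: d_theta_def)

theorem corollary6p7:
  fixes C :: "'a::zero set" and beta delta :: "'a \<Rightarrow> 'a \<Rightarrow> real"
    and theta :: 'a and lam alpha t :: real and S :: "'a set"
  assumes "is_metric_on C beta" and "is_metric_on UNIV delta"
    and "0 \<in> C" and "theta \<in> C" and "lam > 0" and "0 < alpha" and "alpha \<le> 1"
    and "finite S" and "t \<ge> 0"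
  shows "VR S (d_theta C beta delta theta lam alpha) t =
           VR (S \<inter> C) beta t \<union> VR (S - C) (d_reg lam alpha delta) t \<union>
           (VR {x \<in> S \<inter> C. r_C beta theta x \<le> t} beta t \<star>
            VR {y \<in> S - C. r_Y lam alpha delta y \<le> t} (d_reg lam alpha delta) t)"
  using max_gluing.VR_eq[OF max_gluing_d_theta] .

end
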